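(* Let $\mathcal{R}_{\rm SW}$ be the family of all south-west quadrants. For $k=2$ and any $m \geq 2$, we do not have hitting $2$-cliques with respect to $\mathcal{R}_{\rm SW}$; that is, there exists a finite point set $V \subset \mathbb{R}^2$ such that for every collection of pairwise disjoint $2$-element subsets of $V$ some hyperedge of $\mathcal{H}(V,\mathcal{R}_{\rm SW},m)$ contains none of these subsets.
   Context: $\mathcal{R}_{\rm SW} = \{\{(x,y) : x \leq a,\ y \leq b\} : a,b \in \mathbb{R}\}$. For a finite $V \subset \mathbb{R}^2$, $\mathcal{H}(V,\mathcal{R},m)$ is the hypergraph on $V$ whose hyperedges are the sets $V \cap R$, $R \in \mathcal{R}$, of size exactly $m$. For fixed $k,m,\mathcal{R}$ we say we have hitting $k$-cliques if for every finite $V \subset \mathbb{R}^2$ there exist pairwise disjoint $k$-element subsets of $V$ such that every hyperedge of $\mathcal{H}(V,\mathcal{R},m)$ fully contains at least one of them. *)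

theory Defs
  imports Main "HOL-Analysis.Analysis"
begin

definition SW_quadrants :: "(real \<times> real) set set" where
  "SW_quadrants = {{(x, y). x \<le> a \<and> y \<le> b} | a b. True}"

definition hyperedges :: "(real \<times> real) set \<Rightarrow> (real \<times> real) set set \<Rightarrow> nat \<Rightarrow> (real \<times> real) set set" where
  "hyperedges V \<R> m = {V \<inter> R | R. R \<in> \<R> \<and> card (V \<inter> R) = m}"

definition has_hitting_cliques :: "nat \<Rightarrow> nat \<Rightarrow> (real \<times> real) set set \<Rightarrow> bool" where
  "has_hitting_cliques k m \<R> \<longleftrightarrow>
     (\<forall>V. finite V \<longrightarrow>
        (\<exists>\<C>. (\<forall>C\<in>\<C>. C \<subseteq> V \<and> card C = k) \<and>
              (\<forall>C\<in>\<C>. \<forall>D\<in>\<C>. C \<noteq> D \<longrightarrow> C \<inter> D = {}) \<and>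
              (\<forall>E\<in>hyperedges V \<R> m. \<exists>C\<in>\<C>. C \<subseteq> E)))"

end

(* Induction on m, for any clique size k >= 2 (the start m = 0 is V = {}).  Let V lie in the open
   square (0,c)^2 and defeat every disjoint family of k-sets for m-hyperedges.  Put a copy of V at
   (1, 1 + c) and one at (1 + c, 1), and add the apex p = (1/2, 1/2), which lies south-west of both.
   For every m-hyperedge E of V, p together with either copy of E is an (m+1)-hyperedge: the
   quadrant cutting out E, clamped to the square and translated, contains p and misses the other
   copy.  Hence, by the induction hypothesis for each copy, a disjoint family hitting all
   (m+1)-hyperedges has a member through p inside p plus the first copy and one inside p plus the
   second copy.  Disjointness makes them equal, so this member lies in {p}, contradicting k >= 2. *)
theory Submission
  imports Defs
begin

(* Unlike has_hitting_cliques, the cliques need not lie in the vertex set; this only strengthens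
   the negative results below. *)
definition hitting_cliques :: "nat \<Rightarrow> 'a set set \<Rightarrow> 'a set set \<Rightarrow> bool" where
  "hitting_cliques k H \<C> \<longleftrightarrow> (\<forall>C\<in>\<C>. card C = k) \<and> disjoint \<C> \<and> (\<forall>E\<in>H. \<exists>C\<in>\<C>. C \<subseteq> E)"

lemma has_hitting_cliquesD:
  assumes "has_hitting_cliques k m \<R>" "finite V"
  obtains \<C> where "hitting_cliques k (hyperedges V \<R> m) \<C>"
proof -
  have "\<exists>\<C>. (\<forall>C\<in>\<C>. C \<subseteq> V \<and> card C = k) \<and> (\<forall>C\<in>\<C>. \<forall>D\<in>\<C>. C \<noteq> D \<longrightarrow> C \<inter> D = {}) \<and>
    (\<forall>E\<in>hyperedges V \<R> m. \<exists>C\<in>\<C>. C \<subseteq> E)"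
    using assms unfolding has_hitting_cliques_def by blast
  then obtain \<C> where "\<forall>C\<in>\<C>. card C = k" "\<forall>C\<in>\<C>. \<forall>D\<in>\<C>. C \<noteq> D \<longrightarrow> C \<inter> D = {}"
    "\<forall>E\<in>hyperedges V \<R> m. \<exists>C\<in>\<C>. C \<subseteq> E"
    by (elim exE conjE) (rule that, auto)
  then have "hitting_cliques k (hyperedges V \<R> m) \<C>"
    unfolding hitting_cliques_def disjoint_def by blast
  then show thesis ..
qed

lemma hitting_clique_through_apex:
  assumes f: "bij f"
    and no_hit: "\<And>\<D>. \<not> hitting_cliques k H' \<D>"
    and cone: "\<And>E. E \<in> H' \<Longrightarrow> insert p (f ` E) \<in> H"
    and hit: "hitting_cliques k H \<C>"
  obtains C where "C \<in> \<C>" "p \<in> C" "C \<subseteq> insert p (f ` \<Union>H')"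
proof -
  \<comment> \<open>Pulled back along f, the cliques all miss some E in H', so the clique covering
    insert p (f ` E) must contain p.\<close>
  let ?\<D> = "(\<lambda>C. f -` C) ` \<C>"
  have "inj f" "surj f" using f by (auto simp: bij_def)
  have "card (f -` C) = k" if "C \<in> \<C>" for C
    using hit that card_vimage_inj[OF \<open>inj f\<close>] \<open>surj f\<close> unfolding hitting_cliques_def by auto
  moreover have "disjoint ?\<D>"
  proof (rule disjointI)
    fix A B assume "A \<in> ?\<D>" "B \<in> ?\<D>" "A \<noteq> B"
    then obtain C D where "C \<in> \<C>" "D \<in> \<C>" "C \<noteq> D" "A = f -` C" "B = f -` D" by auto
    then show "A \<inter> B = {}"
      using hit disjointD[of \<C> C D] unfolding hitting_cliques_def by (simp flip: vimage_Int)
  qed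
  ultimately obtain E where E: "E \<in> H'" and missed: "\<And>C. C \<in> \<C> \<Longrightarrow> \<not> f -` C \<subseteq> E"
    using no_hit[of ?\<D>] unfolding hitting_cliques_def by auto
  then obtain C where C: "C \<in> \<C>" "C \<subseteq> insert p (f ` E)"
    using hit cone unfolding hitting_cliques_def by blast
  have "p \<in> C"
  proof (rule ccontr)
    assume "p \<notin> C"
    then have "f -` C \<subseteq> f -` (f ` E)" using C(2) by auto
    with missed[OF C(1)] show False by (simp add: inj_vimage_image_eq[OF \<open>inj f\<close>])
  qed
  moreover have "C \<subseteq> insert p (f ` \<Union>H')" using C(2) E by blast
  ultimately show thesis using C(1) that by blast
qed

lemma Union_hyperedges_subset: "\<Union>(hyperedges V \<R> m) \<subseteq> V"
  unfolding hyperedges_def by blast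

lemma hyperedgesI: "R \<in> \<R> \<Longrightarrow> card (V \<inter> R) = m \<Longrightarrow> V \<inter> R \<in> hyperedges V \<R> m"
  unfolding hyperedges_def by blast

definition SW_quadrant :: "real \<Rightarrow> real \<Rightarrow> (real \<times> real) set" where
  "SW_quadrant a b = {(x, y). x \<le> a \<and> y \<le> b}"

lemma SW_quadrants_iff: "R \<in> SW_quadrants \<longleftrightarrow> (\<exists>a b. R = SW_quadrant a b)"
  unfolding SW_quadrants_def SW_quadrant_def by blast

lemma translate_SW_quadrant:
  "(+) t ` SW_quadrant a b = SW_quadrant (a + fst t) (b + snd t)"
proof (rule set_eqI)
  fix x :: "real \<times> real"
  have "x \<in> (+) t ` SW_quadrant a b \<longleftrightarrow> x - t \<in> SW_quadrant a b"
    by (auto intro!: image_eqI[where x = "x - t"])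
  then show "x \<in> (+) t ` SW_quadrant a b \<longleftrightarrow> x \<in> SW_quadrant (a + fst t) (b + snd t)"
    unfolding SW_quadrant_def by (auto simp: case_prod_unfold)
qed

lemma translate_Int_SW_quadrant:
  "(+) t ` (V \<inter> SW_quadrant a b) = (+) t ` V \<inter> SW_quadrant (a + fst t) (b + snd t)"
  unfolding image_Int[OF bij_is_inj[OF bij_plus]] translate_SW_quadrant ..

lemma open_square_memD:
  assumes "V \<subseteq> {0<..<c} \<times> {0<..<c}" "v \<in> V"
  shows "0 < fst v" "fst v < c" "0 < snd v" "snd v < c"
  using assms by (auto simp: mem_Times_iff)

lemma Int_SW_quadrant_clamp:
  assumes "V \<subseteq> {0<..<c} \<times> {0<..<c}"
  shows "V \<inter> SW_quadrant a b = V \<inter> SW_quadrant (max 0 (min a c)) (max 0 (min b c))"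
proof -
  have "x \<le> a \<longleftrightarrow> x \<le> max 0 (min a c)" "y \<le> b \<longleftrightarrow> y \<le> max 0 (min b c)"
    if "(x, y) \<in> V" for x y
  proof -
    have "0 < x" "x < c" "0 < y" "y < c" using open_square_memD[OF assms that] by auto
    then show "x \<le> a \<longleftrightarrow> x \<le> max 0 (min a c)" "y \<le> b \<longleftrightarrow> y \<le> max 0 (min b c)"
      by (auto simp: max_def min_def)
  qed
  then show ?thesis unfolding SW_quadrant_def by auto
qed

lemma insert_translate_hyperedge:
  assumes E: "E \<in> hyperedges V SW_quadrants m"
    and V: "finite V" "V \<subseteq> {0<..<c} \<times> {0<..<c}" and c: "0 < c"
    and p: "p \<in> SW_quadrant (fst t) (snd t)"
    and U: "U \<inter> SW_quadrant (fst t + c) (snd t + c) = {}"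
  shows "insert p ((+) t ` E) \<in> hyperedges (insert p ((+) t ` V \<union> U)) SW_quadrants (Suc m)"
proof -
  obtain a b where E_eq: "E = V \<inter> SW_quadrant a b" and card_E: "card E = m"
    using E unfolding hyperedges_def SW_quadrants_iff by blast
  \<comment> \<open>Clamping a, b to [0, c] keeps the trace on V, puts p into Q and keeps Q away from U.\<close>
  define Q where "Q = SW_quadrant (max 0 (min a c) + fst t) (max 0 (min b c) + snd t)"
  have "(+) t ` E = (+) t ` V \<inter> Q"
    unfolding Q_def E_eq Int_SW_quadrant_clamp[OF V(2), of a b] translate_Int_SW_quadrant ..
  moreover have "p \<in> Q" using p unfolding Q_def SW_quadrant_def by auto
  moreover have "Q \<subseteq> SW_quadrant (fst t + c) (snd t + c)"
    using c unfolding Q_def SW_quadrant_def by auto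
  then have "U \<inter> Q = {}" using U by blast
  ultimately have Int_Q: "insert p ((+) t ` V \<union> U) \<inter> Q = insert p ((+) t ` E)" by auto
  have "fst p < fst (t + v)" if "v \<in> V" for v
    using p V(2) that unfolding SW_quadrant_def by (auto simp: case_prod_unfold subset_eq)
  then have "p \<notin> (+) t ` E" using E_eq by force
  moreover have "card ((+) t ` E) = m" using card_E by (simp add: card_image inj_on_def)
  ultimately have "card (insert p ((+) t ` E)) = Suc m"
    using V(1) E_eq by (simp add: card_insert_if)
  moreover have "Q \<in> SW_quadrants" unfolding Q_def SW_quadrants_iff by blast
  ultimately show ?thesis using hyperedgesI[of Q] Int_Q by metis
qed

definition apex_two_copies :: "real \<Rightarrow> (real \<times> real) set \<Rightarrow> (real \<times> real) set" where
  "apex_two_copies c V = insert (1/2, 1/2) ((+) (1, 1 + c) ` V \<union> (+) (1 + c, 1) ` V)"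

lemma apex_two_copies_subset_box:
  assumes "V \<subseteq> {0<..<c} \<times> {0<..<c}" "0 < c"
  shows "apex_two_copies c V \<subseteq> {0<..<2 * c + 2} \<times> {0<..<2 * c + 2}"
  using assms unfolding apex_two_copies_def by (auto simp: subset_eq)

lemma translated_copies_disjoint:
  fixes c :: real
  assumes "V \<subseteq> {0<..<c} \<times> {0<..<c}"
  shows "(+) (1, 1 + c) ` V \<inter> (+) (1 + c, 1) ` V = {}"
proof -
  have "fst ((1, 1 + c) + v) < 1 + c" "1 + c < fst ((1 + c, 1) + v)" if "v \<in> V" for v
    using open_square_memD[OF assms that] by auto
  then show ?thesis by fastforce
qed

lemma apex_two_copies_no_hitting_cliques:
  assumes k: "2 \<le> k"
    and V: "finite V" "V \<subseteq> {0<..<c} \<times> {0<..<c}" and c: "0 < c"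
    and no_hit: "\<And>\<D>. \<not> hitting_cliques k (hyperedges V SW_quadrants m) \<D>"
  shows "\<not> hitting_cliques k (hyperedges (apex_two_copies c V) SW_quadrants (Suc m)) \<C>"
proof
  assume hit: "hitting_cliques k (hyperedges (apex_two_copies c V) SW_quadrants (Suc m)) \<C>"
  define p :: "real \<times> real" where "p = (1/2, 1/2)"
  define tA :: "real \<times> real" where "tA = (1, 1 + c)"
  define tB :: "real \<times> real" where "tB = (1 + c, 1)"
  define A where "A = (+) tA ` V"
  define B where "B = (+) tB ` V"
  have "p \<in> SW_quadrant (fst tA) (snd tA)" "B \<inter> SW_quadrant (fst tA + c) (snd tA + c) = {}"
    using V(2) c unfolding p_def tA_def tB_def B_def SW_quadrant_def by (auto simp: subset_eq)
  then have "insert p ((+) tA ` E) \<in> hyperedges (apex_two_copies c V) SW_quadrants (Suc m)"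
    if "E \<in> hyperedges V SW_quadrants m" for E
    using insert_translate_hyperedge[OF that V c]
    unfolding apex_two_copies_def p_def tA_def tB_def B_def by simp
  from hitting_clique_through_apex[OF bij_plus no_hit this hit]
  obtain CA where CA: "CA \<in> \<C>" "p \<in> CA" "CA \<subseteq> insert p ((+) tA ` \<Union>(hyperedges V SW_quadrants m))" .
  then have "CA \<subseteq> insert p A" using Union_hyperedges_subset unfolding A_def by blast
  have "p \<in> SW_quadrant (fst tB) (snd tB)" "A \<inter> SW_quadrant (fst tB + c) (snd tB + c) = {}"
    using V(2) c unfolding p_def tA_def tB_def A_def SW_quadrant_def by (auto simp: subset_eq)
  then have "insert p ((+) tB ` E) \<in> hyperedges (apex_two_copies c V) SW_quadrants (Suc m)"
    if "E \<in> hyperedges V SW_quadrants m" for E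
    using insert_translate_hyperedge[OF that V c]
    unfolding apex_two_copies_def p_def tA_def tB_def A_def by (simp add: Un_commute)
  from hitting_clique_through_apex[OF bij_plus no_hit this hit]
  obtain CB where CB: "CB \<in> \<C>" "p \<in> CB" "CB \<subseteq> insert p ((+) tB ` \<Union>(hyperedges V SW_quadrants m))" .
  then have "CB \<subseteq> insert p B" using Union_hyperedges_subset unfolding B_def by blast
  have "CA = CB"
    using hit CA CB disjointD[of \<C> CA CB] unfolding hitting_cliques_def by blast
  then have "CA \<subseteq> {p}"
    using \<open>CA \<subseteq> insert p A\<close> \<open>CB \<subseteq> insert p B\<close> translated_copies_disjoint[OF V(2)]
    unfolding A_def B_def tA_def tB_def by blast
  then have "card CA \<le> 1" using card_mono[of "{p}" CA] by simp
  with hit CA(1) k show False unfolding hitting_cliques_def by auto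
qed

lemma exists_SW_point_set_without_hitting_cliques:
  assumes k: "2 \<le> k"
  shows "\<exists>V c. finite V \<and> 0 < c \<and> V \<subseteq> {0<..<c} \<times> {0<..<c} \<and>
           (\<forall>\<C>. \<not> hitting_cliques k (hyperedges V SW_quadrants m) \<C>)"
proof (induction m)
  case 0
  have "{} \<in> hyperedges {} SW_quadrants 0"
    using hyperedgesI[of "SW_quadrant 0 0" SW_quadrants "{}" 0] by (auto simp: SW_quadrants_iff)
  then have "\<not> hitting_cliques k (hyperedges {} SW_quadrants 0) \<C>" for \<C>
    using k unfolding hitting_cliques_def by fastforce
  then show ?case by (intro exI[of _ "{}"] exI[of _ 1]) auto
next
  case (Suc m)
  then obtain V c where V: "finite V" "0 < c" "V \<subseteq> {0<..<c} \<times> {0<..<c}"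
    and no_hit: "\<And>\<C>. \<not> hitting_cliques k (hyperedges V SW_quadrants m) \<C>"
    by blast
  show ?case
  proof (intro exI conjI allI)
    show "finite (apex_two_copies c V)" using V(1) unfolding apex_two_copies_def by simp
    show "apex_two_copies c V \<subseteq> {0<..<2 * c + 2} \<times> {0<..<2 * c + 2}"
      using apex_two_copies_subset_box[OF V(3,2)] .
    show "\<not> hitting_cliques k (hyperedges (apex_two_copies c V) SW_quadrants (Suc m)) \<C>" for \<C>
      using apex_two_copies_no_hitting_cliques[OF k V(1,3,2) no_hit] .
  qed (use V(2) in simp)
qed

theorem not_has_hitting_cliques_SW_quadrants:
  assumes "2 \<le> k"
  shows "\<not> has_hitting_cliques k m SW_quadrants"
proof
  obtain V where "finite V" and no_hit: "\<And>\<C>. \<not> hitting_cliques k (hyperedges V SW_quadrants m) \<C>"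
    using exists_SW_point_set_without_hitting_cliques[OF assms] by blast
  assume "has_hitting_cliques k m SW_quadrants"
  with \<open>finite V\<close> no_hit show False by (auto elim: has_hitting_cliquesD)
qed

theorem corollary5:
  fixes m :: nat
  assumes "m \<ge> 2"
  shows "\<not> has_hitting_cliques 2 m SW_quadrants"
  by (rule not_has_hitting_cliques_SW_quadrants) simp

end
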